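(* For every $n\ge 5$, the alternating group $A_n$ is mixable, and \[\log_2(n!)-1\le \mathrm{mixlen}(A_n)\le \tfrac{3}{2}\lfloor\log_2(n!)\rfloor+\tfrac{1}{2}n.\]
   Context: For a finite group $G$, a random subproduct is a random element $g_1^{\epsilon_1}\cdots g_k^{\epsilon_k}$ where $g_1,\dots,g_k\in G$ are fixed and $\epsilon_1,\dots,\epsilon_k$ are independent Bernoulli random variables with $\epsilon_i\sim\mathrm{Ber}(p_i)$, $p_i\in[0,1]$. $G$ is mixable if some random subproduct is distributed exactly uniformly on $G$; the mixing length $\mathrm{mixlen}(G)$ is the minimal number $k$ of factors in such a random subproduct. *)

theory Defs
  imports "HOL-Analysis.Analysis" "HOL-Algebra.Sym_Groups"
begin

text \<open>The subproduct g_0^{e_0} g_1^{e_1} ... g_{k-1}^{e_{k-1}} (in this order), where the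
  exponent vector e is encoded by the set S of indices i with e_i = 1.\<close>
definition subprod :: "('a, 'b) monoid_scheme \<Rightarrow> (nat \<Rightarrow> 'a) \<Rightarrow> nat \<Rightarrow> nat set \<Rightarrow> 'a" where
  "subprod G g k S = foldr (\<lambda>i acc. (if i \<in> S then g i else \<one>\<^bsub>G\<^esub>) \<otimes>\<^bsub>G\<^esub> acc) [0..<k] \<one>\<^bsub>G\<^esub>"

text \<open>Probability that the random subproduct with independent eps_i ~ Ber(p i) equals x.\<close>
definition subprod_prob :: "('a, 'b) monoid_scheme \<Rightarrow> (nat \<Rightarrow> 'a) \<Rightarrow> (nat \<Rightarrow> real) \<Rightarrow> nat \<Rightarrow> 'a \<Rightarrow> real" where
  "subprod_prob G g p k x =
     (\<Sum>S\<in>{S. S \<subseteq> {0..<k} \<and> subprod G g k S = x}.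
        \<Prod>i\<in>{0..<k}. (if i \<in> S then p i else 1 - p i))"

definition mixes_with :: "('a, 'b) monoid_scheme \<Rightarrow> nat \<Rightarrow> bool" where
  "mixes_with G k \<longleftrightarrow> (\<exists>g p.
     (\<forall>i<k. g i \<in> carrier G) \<and> (\<forall>i<k. 0 \<le> p i \<and> p i \<le> 1) \<and>
     (\<forall>x\<in>carrier G. subprod_prob G g p k x = 1 / real (card (carrier G))))"

definition mixable :: "('a, 'b) monoid_scheme \<Rightarrow> bool" where
  "mixable G \<longleftrightarrow> (\<exists>k. mixes_with G k)"

definition mixlen :: "('a, 'b) monoid_scheme \<Rightarrow> nat" where
  "mixlen G = (LEAST k. mixes_with G k)"

end

theory Submission
  imports Defs "HOL-Library.Discrete_Functions"
begin

text \<open>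
  Lower bound: a subproduct of \<open>k\<close> factors takes at most \<open>2 ^ k\<close> values, so a uniform one on
  \<open>A\<^sub>n\<close> needs \<open>2 ^ k \<ge> n! / 2\<close>.

  Upper bound: the factors move one point at a time. A block of factors sends the point \<open>m\<close> to a
  uniformly random point of \<open>{1..m}\<close>: for even \<open>m\<close>, swap the two halves with probability 1/2 and
  recurse on the upper half; for odd \<open>m\<close>, step down with probability \<open>(m - 1) / m\<close> and recurse on
  \<open>{1..m - 1}\<close>. An odd halves swap is corrected by a transposition inside the upper half, which
  does not change where that half goes; the remaining odd step, swapping two adjacent points at
  the bottom of the recursion, is corrected with the spare transposition \<open>(n - 1 n)\<close> while
  \<open>m \<le> n - 2\<close>, and with a point just below the interval in the two blocks placing \<open>n\<close> and
  \<open>n - 1\<close>. The blocks for \<open>m = 2, \<dots>, n - 2\<close> arrange \<open>{1..n - 2}\<close> uniformly, the two top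
  blocks then place the last two points, and an even permutation is determined by its values on
  \<open>{1..n - 2}\<close>, so the product is uniform on \<open>A\<^sub>n\<close>.
  A block for \<open>m\<close> has \<open>c(m)\<close> factors with \<open>c(2k) = c(k) + 1\<close> and \<open>c(2k + 1) = c(k) + 2\<close>, and
  \<open>2 c(m) - 3 \<lfloor>log\<^sub>2 m\<rfloor> - 1\<close> sums to at most \<open>-1\<close> over \<open>m = 1..n\<close>, which gives the upper bound.
\<close>

section \<open>Random subproducts\<close>

definition subprod_pmf :: "('a, 'b) monoid_scheme \<Rightarrow> ('a \<times> real) list \<Rightarrow> 'a \<Rightarrow> real" where
  "subprod_pmf G L = subprod_prob G (\<lambda>i. fst (L ! i)) (\<lambda>i. snd (L ! i)) (length L)"

lemma subprod_cong:
  assumes "\<And>i. i < k \<Longrightarrow> g i = g' i" "\<And>i. i < k \<Longrightarrow> i \<in> S \<longleftrightarrow> i \<in> S'"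
  shows "subprod G g k S = subprod G g' k S'"
  unfolding subprod_def by (rule foldr_cong) (use assms in auto)

lemma subprod_prob_cong:
  assumes "\<And>i. i < k \<Longrightarrow> g i = g' i" "\<And>i. i < k \<Longrightarrow> p i = p' i"
  shows "subprod_prob G g p k = subprod_prob G g' p' k"
proof
  fix x
  have "{S. S \<subseteq> {0..<k} \<and> subprod G g k S = x} = {S. S \<subseteq> {0..<k} \<and> subprod G g' k S = x}"
    using subprod_cong[of k g g'] assms(1) by auto
  then show "subprod_prob G g p k x = subprod_prob G g' p' k x"
    unfolding subprod_prob_def by (intro sum.cong prod.cong) (use assms(2) in auto)
qed

lemma subprod_prob_eq_sum_Pow:
  "subprod_prob G g p k x = (\<Sum>S\<in>Pow {0..<k}.
     if subprod G g k S = x then \<Prod>i\<in>{0..<k}. if i \<in> S then p i else 1 - p i else 0)"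
proof -
  have "{S. S \<subseteq> {0..<k} \<and> subprod G g k S = x} = {S \<in> Pow {0..<k}. subprod G g k S = x}"
    by auto
  then show ?thesis unfolding subprod_prob_def by (simp add: sum.inter_filter[symmetric])
qed

lemma subprod_prob_nonzero_imp_subprod:
  assumes "subprod_prob G g p k x \<noteq> 0"
  obtains S where "S \<subseteq> {0..<k}" "subprod G g k S = x"
proof -
  have "{S. S \<subseteq> {0..<k} \<and> subprod G g k S = x} \<noteq> {}"
    using assms unfolding subprod_prob_def by force
  then show ?thesis using that by blast
qed

lemma card_carrier_le_power_if_mixes_with:
  assumes "mixes_with G k" "finite (carrier G)" "carrier G \<noteq> {}"
  shows "card (carrier G) \<le> 2 ^ k"
proof -
  obtain g p where uniform: "\<And>x. x \<in> carrier G \<Longrightarrow> subprod_prob G g p k x = 1 / card (carrier G)"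
    using assms(1) unfolding mixes_with_def by blast
  have "carrier G \<subseteq> subprod G g k ` Pow {0..<k}"
  proof
    fix x assume "x \<in> carrier G"
    then have "subprod_prob G g p k x \<noteq> 0"
      using uniform assms(2,3) by (simp add: card_gt_0_iff)
    then obtain S where "S \<subseteq> {0..<k}" "subprod G g k S = x"
      by (rule subprod_prob_nonzero_imp_subprod)
    then show "x \<in> subprod G g k ` Pow {0..<k}" by blast
  qed
  then have "card (carrier G) \<le> card (subprod G g k ` Pow {0..<k})"
    by (intro card_mono) auto
  also have "\<dots> \<le> card (Pow {0..<k})" by (rule card_image_le) simp
  finally show ?thesis by (simp add: card_Pow)
qed

lemma log_card_carrier_le_if_mixes_with:
  assumes "mixes_with G k" "finite (carrier G)" "carrier G \<noteq> {}"
  shows "log 2 (card (carrier G)) \<le> k"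
proof -
  have "real (card (carrier G)) \<le> 2 ^ k"
    using card_carrier_le_power_if_mixes_with[OF assms] by (simp add: of_nat_le_iff[symmetric])
  moreover have "card (carrier G) > 0" using assms(2,3) by (simp add: card_gt_0_iff)
  ultimately have "log 2 (card (carrier G)) \<le> log 2 (2 ^ k)" by (subst log_le_cancel_iff) auto
  then show ?thesis by (simp add: log_pow_cancel)
qed

context monoid
begin

lemma foldr_mult_closed:
  assumes "\<And>i. i \<in> set xs \<Longrightarrow> c i \<in> carrier G"
  shows "foldr (\<lambda>i acc. c i \<otimes> acc) xs \<one> \<in> carrier G"
  using assms by (induction xs) auto

lemma foldr_mult_eq_foldr_one_mult:
  assumes "\<And>i. i \<in> set xs \<Longrightarrow> c i \<in> carrier G" "a \<in> carrier G"
  shows "foldr (\<lambda>i acc. c i \<otimes> acc) xs a = foldr (\<lambda>i acc. c i \<otimes> acc) xs \<one> \<otimes> a"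
  using assms by (induction xs) (auto simp: m_assoc foldr_mult_closed)

lemma subprod_closed:
  assumes "\<And>i. i < k \<Longrightarrow> g i \<in> carrier G"
  shows "subprod G g k S \<in> carrier G"
  unfolding subprod_def by (rule foldr_mult_closed) (use assms in auto)

lemma subprod_Suc:
  assumes "\<And>i. i \<le> k \<Longrightarrow> g i \<in> carrier G"
  shows "subprod G g (Suc k) S = subprod G g k S \<otimes> (if k \<in> S then g k else \<one>)"
proof -
  have "subprod G g (Suc k) S = foldr (\<lambda>i acc. (if i \<in> S then g i else \<one>) \<otimes> acc) [0..<k]
      ((if k \<in> S then g k else \<one>) \<otimes> \<one>)"
    unfolding subprod_def by simp
  then show ?thesis
    unfolding subprod_def using assms by (subst (asm) foldr_mult_eq_foldr_one_mult) auto
qed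

lemma subprod_mem:
  assumes "\<one> \<in> M" "\<And>a b. a \<in> M \<Longrightarrow> b \<in> M \<Longrightarrow> a \<otimes> b \<in> M" "\<And>i. i < k \<Longrightarrow> g i \<in> M"
  shows "subprod G g k S \<in> M"
proof -
  have "foldr (\<lambda>i acc. (if i \<in> S then g i else \<one>) \<otimes> acc) xs \<one> \<in> M"
    if "\<forall>i\<in>set xs. i < k" for xs
    using that by (induction xs) (use assms in auto)
  then show ?thesis unfolding subprod_def by simp
qed

end

lemma (in group) subprod_prob_Suc:
  assumes "\<And>i. i \<le> k \<Longrightarrow> g i \<in> carrier G" "x \<in> carrier G"
  shows "subprod_prob G g p (Suc k) x =
    (1 - p k) * subprod_prob G g p k x + p k * subprod_prob G g p k (x \<otimes> inv (g k))"
proof -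
  define w where "w k S = (\<Prod>i\<in>{0..<k}. if i \<in> S then p i else 1 - p i)" for k S
  define h where "h S = (if subprod G g (Suc k) S = x then w (Suc k) S else 0)" for S
  have gk: "g k \<in> carrier G" using assms by auto
  have closed: "subprod G g k S \<in> carrier G" for S using assms by (intro subprod_closed) auto
  have "subprod_prob G g p (Suc k) x = sum h (Pow {0..<Suc k})"
    unfolding subprod_prob_eq_sum_Pow h_def w_def ..
  also have "Pow {0..<Suc k} = Pow {0..<k} \<union> insert k ` Pow {0..<k}"
    by (simp add: atLeast0_lessThan_Suc Pow_insert)
  also have "sum h \<dots> = sum h (Pow {0..<k}) + sum (h \<circ> insert k) (Pow {0..<k})"
  proof -
    have "inj_on (insert k) (Pow {0..<k})"
      unfolding inj_on_def by (metis Diff_insert_absorb PowD atLeastLessThan_iff less_irrefl subsetD)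
    then show ?thesis by (subst sum.union_disjoint) (auto simp: sum.reindex)
  qed
  also have "sum h (Pow {0..<k}) = (1 - p k) * subprod_prob G g p k x"
  proof -
    have "h S = (1 - p k) * (if subprod G g k S = x then w k S else 0)" if "S \<in> Pow {0..<k}" for S
    proof -
      have "k \<notin> S" using that by auto
      then show ?thesis
        using subprod_Suc[of k g S] assms closed unfolding h_def w_def by auto
    qed
    then show ?thesis unfolding subprod_prob_eq_sum_Pow w_def by (simp add: sum_distrib_left)
  qed
  also have "sum (h \<circ> insert k) (Pow {0..<k}) = p k * subprod_prob G g p k (x \<otimes> inv (g k))"
  proof -
    have "h (insert k S) = p k * (if subprod G g k S = x \<otimes> inv (g k) then w k S else 0)"
      if "S \<in> Pow {0..<k}" for S
    proof -
      have "subprod G g k (insert k S) = subprod G g k S"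
        by (rule subprod_cong) auto
      then have "subprod G g (Suc k) (insert k S) = subprod G g k S \<otimes> g k"
        using subprod_Suc[of k g "insert k S"] assms by auto
      moreover have "w (Suc k) (insert k S) = w k S * p k"
        unfolding w_def using that by (auto intro!: prod.cong)
      moreover have "subprod G g k S \<otimes> g k = x \<longleftrightarrow> subprod G g k S = x \<otimes> inv (g k)"
        using inv_solve_right[OF closed assms(2) gk] by auto
      ultimately show ?thesis unfolding h_def by auto
    qed
    then show ?thesis unfolding subprod_prob_eq_sum_Pow w_def by (simp add: sum_distrib_left)
  qed
  finally show ?thesis .
qed

lemma subprod_pmf_Nil: "subprod_pmf G [] x = (if x = \<one>\<^bsub>G\<^esub> then 1 else 0)"
proof -
  have "{S. S \<subseteq> {0..<0::nat} \<and> subprod G g 0 S = x} = (if x = \<one>\<^bsub>G\<^esub> then {{}} else {})" for g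
    by (auto simp: subprod_def)
  then show ?thesis unfolding subprod_pmf_def subprod_prob_def by simp
qed

lemma subprod_pmf_nonzero_imp_mem:
  assumes "monoid G" "subprod_pmf G L x \<noteq> 0" "fst ` set L \<subseteq> M"
    "\<one>\<^bsub>G\<^esub> \<in> M" "\<And>a b. a \<in> M \<Longrightarrow> b \<in> M \<Longrightarrow> a \<otimes>\<^bsub>G\<^esub> b \<in> M"
  shows "x \<in> M"
proof -
  obtain S where "subprod G (\<lambda>i. fst (L ! i)) (length L) S = x"
    using assms(2) unfolding subprod_pmf_def by (auto elim: subprod_prob_nonzero_imp_subprod)
  moreover have "subprod G (\<lambda>i. fst (L ! i)) (length L) S \<in> M"
    by (rule monoid.subprod_mem[OF assms(1)]) (use assms(3-5) in auto)
  ultimately show ?thesis by simp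
qed

context group
begin

lemma subprod_pmf_snoc:
  assumes "fst ` set L \<subseteq> carrier G" "h \<in> carrier G" "x \<in> carrier G"
  shows "subprod_pmf G (L @ [(h, q)]) x = (1 - q) * subprod_pmf G L x + q * subprod_pmf G L (x \<otimes> inv h)"
proof -
  let ?g = "\<lambda>i. fst ((L @ [(h, q)]) ! i)" and ?p = "\<lambda>i. snd ((L @ [(h, q)]) ! i)"
  have "?g i \<in> carrier G" if "i \<le> length L" for i
    using that assms(1,2) by (cases "i = length L") (auto simp: nth_append)
  then have "subprod_pmf G (L @ [(h, q)]) x = (1 - q) * subprod_prob G ?g ?p (length L) x
      + q * subprod_prob G ?g ?p (length L) (x \<otimes> inv h)"
    unfolding subprod_pmf_def using subprod_prob_Suc[of "length L" ?g x ?p] assms(3) by simp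
  also have "subprod_prob G ?g ?p (length L) = subprod_pmf G L"
    unfolding subprod_pmf_def by (rule subprod_prob_cong) (auto simp: nth_append)
  finally show ?thesis .
qed

lemma subprod_pmf_append:
  assumes "finite (carrier G)" "fst ` set A \<subseteq> carrier G" "fst ` set B \<subseteq> carrier G" "x \<in> carrier G"
  shows "subprod_pmf G (A @ B) x = (\<Sum>z\<in>carrier G. subprod_pmf G A z * subprod_pmf G B (inv z \<otimes> x))"
  using assms(3,4)
proof (induction B arbitrary: x rule: rev_induct)
  case Nil
  have "inv z \<otimes> x = \<one> \<longleftrightarrow> z = x" if "z \<in> carrier G" for z
    using that Nil.prems by (metis inv_closed inv_equality inv_inv r_inv)
  then have "(\<Sum>z\<in>carrier G. subprod_pmf G A z * subprod_pmf G [] (inv z \<otimes> x)) =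
      (\<Sum>z\<in>carrier G. if z = x then subprod_pmf G A z else 0)"
    by (intro sum.cong) (auto simp: subprod_pmf_Nil)
  then show ?case using Nil.prems assms(1) by simp
next
  case (snoc b B)
  obtain h q where b: "b = (h, q)" by fastforce
  have h: "h \<in> carrier G" and B: "fst ` set B \<subseteq> carrier G" using snoc.prems(1) b by auto
  have "subprod_pmf G (A @ B @ [b]) x =
      (1 - q) * subprod_pmf G (A @ B) x + q * subprod_pmf G (A @ B) (x \<otimes> inv h)"
    using subprod_pmf_snoc[of "A @ B" h x q] assms(2) B h snoc.prems(2) b by (simp add: image_Un)
  also have "\<dots> = (1 - q) * (\<Sum>z\<in>carrier G. subprod_pmf G A z * subprod_pmf G B (inv z \<otimes> x))
      + q * (\<Sum>z\<in>carrier G. subprod_pmf G A z * subprod_pmf G B (inv z \<otimes> (x \<otimes> inv h)))"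
    using snoc.IH[OF B] snoc.prems h by simp
  also have "\<dots> = (\<Sum>z\<in>carrier G. subprod_pmf G A z *
      ((1 - q) * subprod_pmf G B (inv z \<otimes> x) + q * subprod_pmf G B (inv z \<otimes> (x \<otimes> inv h))))"
    by (simp only: sum_distrib_left distrib_left sum.distrib mult.left_commute)
  also have "\<dots> = (\<Sum>z\<in>carrier G. subprod_pmf G A z * subprod_pmf G (B @ [b]) (inv z \<otimes> x))"
  proof (intro sum.cong refl arg_cong2[where f = "(*)"])
    fix z assume "z \<in> carrier G"
    then show "(1 - q) * subprod_pmf G B (inv z \<otimes> x) + q * subprod_pmf G B (inv z \<otimes> (x \<otimes> inv h)) =
        subprod_pmf G (B @ [b]) (inv z \<otimes> x)"
      using subprod_pmf_snoc[OF B h, of "inv z \<otimes> x" q] snoc.prems(2) h b by (simp add: m_assoc)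
  qed
  finally show ?case by simp
qed

end

section \<open>Random even permutations acting on tuples\<close>

abbreviation Alt :: "nat \<Rightarrow> (nat \<Rightarrow> nat) set" where
  "Alt n \<equiv> carrier (alt_group n)"

lemma Alt_permutes: "z \<in> Alt n \<Longrightarrow> z permutes {1..n}"
  by (simp add: alt_group_carrier)

lemma Alt_memI: "z permutes S \<Longrightarrow> S \<subseteq> {1..n} \<Longrightarrow> evenperm z \<Longrightarrow> z \<in> Alt n"
  by (auto simp: alt_group_carrier intro: permutes_subset)

lemma finite_Alt: "finite (Alt n)"
proof (rule finite_subset)
  show "Alt n \<subseteq> {p. p permutes {1..n}}" using Alt_permutes by blast
qed (simp add: finite_permutations)

lemma id_in_Alt: "id \<in> Alt n"
  using group.is_monoid[OF alt_group_is_group] by (metis alt_group_one monoid.one_closed)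

lemma comp_in_Alt: "a \<in> Alt n \<Longrightarrow> b \<in> Alt n \<Longrightarrow> a \<circ> b \<in> Alt n"
  using group.is_monoid[OF alt_group_is_group] by (metis alt_group_mult monoid.m_closed)

lemma Alt_inv_apply: "z \<in> Alt n \<Longrightarrow> inv' z (z x) = x"
  by (rule permutes_inverses(2)[OF Alt_permutes])

lemma Alt_apply_inv: "z \<in> Alt n \<Longrightarrow> z (inv' z x) = x"
  by (rule permutes_inverses(1)[OF Alt_permutes])

lemma Alt_inj: "z \<in> Alt n \<Longrightarrow> inj z"
  by (rule permutes_inj[OF Alt_permutes])

lemma subprod_pmf_append_Alt:
  assumes "fst ` set A \<subseteq> Alt n" "fst ` set B \<subseteq> Alt n" "x \<in> Alt n"
  shows "subprod_pmf (alt_group n) (A @ B) x =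
    (\<Sum>z\<in>Alt n. subprod_pmf (alt_group n) A z * subprod_pmf (alt_group n) B (inv' z \<circ> x))"
  using group.subprod_pmf_append[OF alt_group_is_group finite_Alt assms]
  by (simp add: alt_group_inv_equality alt_group_mult)

lemma sum_subprod_pmf_single_Alt:
  assumes "h \<in> Alt n"
  shows "(\<Sum>y\<in>Alt n. subprod_pmf (alt_group n) [(h, q)] y * F y) = (1 - q) * F id + q * F h"
proof -
  have pmf: "subprod_pmf (alt_group n) [(h, q)] y = (1 - q) * (if y = id then 1 else 0) + q * (if y = h then 1 else 0)"
    if "y \<in> Alt n" for y
  proof -
    have "y \<circ> inv' h = id \<longleftrightarrow> y = h"
      using permutes_inv_o[OF Alt_permutes[OF assms]] by (metis comp_id o_assoc)
    then show ?thesis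
      using group.subprod_pmf_snoc[OF alt_group_is_group, where L="[]" and h=h and q=q and x=y] assms that
      by (simp add: subprod_pmf_Nil alt_group_one alt_group_inv_equality alt_group_mult)
  qed
  have "(\<Sum>y\<in>Alt n. subprod_pmf (alt_group n) [(h, q)] y * F y) =
      (\<Sum>y\<in>Alt n. (1 - q) * (if y = id then F y else 0) + q * (if y = h then F y else 0))"
    by (intro sum.cong) (auto simp: pmf distrib_right)
  also have "\<dots> = (1 - q) * F id + q * F h"
    using assms id_in_Alt finite_Alt by (simp add: sum.distrib sum_distrib_left[symmetric])
  finally show ?thesis .
qed

lemma subprod_pmf_nonzero_imp_fixes:
  assumes "subprod_pmf (alt_group n) L y \<noteq> 0" "\<And>a. a \<in> set L \<Longrightarrow> fst a p = p"
  shows "y p = p"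
proof -
  have "fst ` set L \<subseteq> {y. y p = p}" using assms(2) by auto
  then show ?thesis
    using subprod_pmf_nonzero_imp_mem[OF group.is_monoid[OF alt_group_is_group] assms(1), of "{y. y p = p}"]
    by (simp add: alt_group_one alt_group_mult)
qed

lemma subprod_pmf_nonzero_imp_image_eq:
  assumes "subprod_pmf (alt_group n) L y \<noteq> 0" "\<And>a. a \<in> set L \<Longrightarrow> fst a ` S = S"
  shows "y ` S = S"
proof -
  have "fst ` set L \<subseteq> {y. y ` S = S}" using assms(2) by auto
  moreover have "a \<circ> b \<in> {y. y ` S = S}" if "a \<in> {y. y ` S = S}" "b \<in> {y. y ` S = S}" for a b
    using that image_comp[of a b S] by simp
  ultimately show ?thesis
    using subprod_pmf_nonzero_imp_mem[OF group.is_monoid[OF alt_group_is_group] assms(1), of "{y. y ` S = S}"]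
    by (simp add: alt_group_one alt_group_mult)
qed

lemma map_Alt_eq_iff: "z \<in> Alt n \<Longrightarrow> map z s = t \<longleftrightarrow> s = map (inv' z) t"
  by (auto simp: comp_def Alt_inv_apply Alt_apply_inv map_idI)

definition prob_maps_to :: "nat \<Rightarrow> ((nat \<Rightarrow> nat) \<times> real) list \<Rightarrow> nat list \<Rightarrow> nat list \<Rightarrow> real" where
  "prob_maps_to n L s t = (\<Sum>y\<in>Alt n. subprod_pmf (alt_group n) L y * (if map y s = t then 1 else 0))"

lemma prob_maps_to_append:
  assumes "fst ` set A \<subseteq> Alt n" "fst ` set B \<subseteq> Alt n"
  shows "prob_maps_to n (A @ B) s t =
    (\<Sum>z\<in>Alt n. subprod_pmf (alt_group n) A z * prob_maps_to n B s (map (inv' z) t))"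
proof -
  let ?P = "subprod_pmf (alt_group n) A" and ?Q = "subprod_pmf (alt_group n) B"
  let ?I = "\<lambda>y. if map y s = t then 1 else 0 :: real"
  have "prob_maps_to n (A @ B) s t = (\<Sum>y\<in>Alt n. \<Sum>z\<in>Alt n. ?P z * (?Q (inv' z \<circ> y) * ?I y))"
    unfolding prob_maps_to_def using subprod_pmf_append_Alt[OF assms]
    by (simp add: sum_distrib_right mult.assoc)
  also have "\<dots> = (\<Sum>z\<in>Alt n. ?P z * (\<Sum>y\<in>Alt n. ?Q (inv' z \<circ> y) * ?I y))"
    by (subst sum.swap) (simp add: sum_distrib_left)
  also have "\<dots> = (\<Sum>z\<in>Alt n. ?P z * prob_maps_to n B s (map (inv' z) t))"
  proof (intro sum.cong refl arg_cong2[where f = "(*)"])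
    fix z assume z: "z \<in> Alt n"
    have z': "inv' z \<in> Alt n" by (rule alt_group_inv_closed[OF z])
    show "(\<Sum>y\<in>Alt n. ?Q (inv' z \<circ> y) * ?I y) = prob_maps_to n B s (map (inv' z) t)"
      unfolding prob_maps_to_def
    proof (rule sum.reindex_bij_witness[where i = "\<lambda>v. z \<circ> v" and j = "\<lambda>y. inv' z \<circ> y"])
      fix y assume y: "y \<in> Alt n"
      show "z \<circ> (inv' z \<circ> y) = y" "inv' z \<circ> y \<in> Alt n"
        using z y z' by (auto simp: comp_in_Alt Alt_apply_inv)
      have "map (inv' z \<circ> y) s = map (inv' z) t \<longleftrightarrow> map y s = t"
        using inj_map_eq_map[OF Alt_inj[OF z'], of "map y s" t] by simp
      then show "?Q (inv' z \<circ> y) * (if map (inv' z \<circ> y) s = map (inv' z) t then 1 else 0) =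
          ?Q (inv' z \<circ> y) * ?I y" by simp
    next
      fix v assume "v \<in> Alt n"
      then show "inv' z \<circ> (z \<circ> v) = v" "z \<circ> v \<in> Alt n"
        using z by (auto simp: comp_in_Alt Alt_inv_apply)
    qed
  qed
  finally show ?thesis .
qed

lemma prob_maps_to_Nil: "prob_maps_to n [] s t = (if s = t then 1 else 0)"
proof -
  have "prob_maps_to n [] s t = (\<Sum>y\<in>Alt n. if y = id then if map y s = t then 1 else 0 else 0)"
    unfolding prob_maps_to_def by (intro sum.cong) (auto simp: subprod_pmf_Nil alt_group_one)
  then show ?thesis using finite_Alt id_in_Alt by simp
qed

lemma prob_maps_to_single:
  assumes "h \<in> Alt n"
  shows "prob_maps_to n [(h, q)] s t = (1 - q) * (if s = t then 1 else 0) + q * (if map h s = t then 1 else 0)"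
  unfolding prob_maps_to_def sum_subprod_pmf_single_Alt[OF assms] by simp

lemma prob_maps_to_snoc:
  assumes "fst ` set L \<subseteq> Alt n" "h \<in> Alt n"
  shows "prob_maps_to n (L @ [(h, q)]) s t = (1 - q) * prob_maps_to n L s t + q * prob_maps_to n L (map h s) t"
proof -
  have "prob_maps_to n (L @ [(h, q)]) s t =
      (\<Sum>z\<in>Alt n. subprod_pmf (alt_group n) L z * prob_maps_to n [(h, q)] s (map (inv' z) t))"
    using assms by (intro prob_maps_to_append) auto
  also have "\<dots> = (\<Sum>z\<in>Alt n. (1 - q) * (subprod_pmf (alt_group n) L z * (if map z s = t then 1 else 0))
      + q * (subprod_pmf (alt_group n) L z * (if map z (map h s) = t then 1 else 0)))"
  proof (intro sum.cong refl)
    fix z assume z: "z \<in> Alt n"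
    show "subprod_pmf (alt_group n) L z * prob_maps_to n [(h, q)] s (map (inv' z) t) =
        (1 - q) * (subprod_pmf (alt_group n) L z * (if map z s = t then 1 else 0))
        + q * (subprod_pmf (alt_group n) L z * (if map z (map h s) = t then 1 else 0))"
      unfolding prob_maps_to_single[OF assms(2)] map_Alt_eq_iff[OF z, of s t]
        map_Alt_eq_iff[OF z, of "map h s" t]
      by (simp add: algebra_simps)
  qed
  also have "\<dots> = (1 - q) * prob_maps_to n L s t + q * prob_maps_to n L (map h s) t"
    unfolding prob_maps_to_def by (simp add: sum.distrib sum_distrib_left)
  finally show ?thesis .
qed

lemma prob_maps_to_Cons:
  assumes "fst ` set L \<subseteq> Alt n" "h \<in> Alt n"
  shows "prob_maps_to n ((h, q) # L) s t = (1 - q) * prob_maps_to n L s t + q * prob_maps_to n L s (map (inv' h) t)"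
proof -
  have "prob_maps_to n ([(h, q)] @ L) s t =
      (\<Sum>z\<in>Alt n. subprod_pmf (alt_group n) [(h, q)] z * prob_maps_to n L s (map (inv' z) t))"
    using assms by (intro prob_maps_to_append) auto
  then show ?thesis by (simp add: sum_subprod_pmf_single_Alt[OF assms(2)] inv_id)
qed

lemma prob_maps_to_fixed_point:
  assumes "fst ` set L \<subseteq> Alt n" "\<And>a. a \<in> set L \<Longrightarrow> fst a p = p"
  shows "prob_maps_to n L [p] t = (if t = [p] then 1 else 0)"
  using assms
proof (induction L rule: rev_induct)
  case Nil then show ?case by (auto simp: prob_maps_to_Nil)
next
  case (snoc a L)
  obtain h q where a: "a = (h, q)" by fastforce
  have "h p = p" "h \<in> Alt n" using snoc.prems(1) snoc.prems(2)[of a] a by auto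
  then show ?case using snoc a by (simp add: prob_maps_to_snoc algebra_simps)
qed

lemma prob_maps_to_snoc_fixed_point:
  assumes "fst ` set L \<subseteq> Alt n" "\<And>a. a \<in> set L \<Longrightarrow> fst a p = p" "length s = length t"
  shows "prob_maps_to n L (s @ [p]) (t @ [b]) = (if b = p then prob_maps_to n L s t else 0)"
proof (cases "b = p")
  case True
  have eq: "subprod_pmf (alt_group n) L y * (if map y (s @ [p]) = t @ [p] then 1 else 0) =
      subprod_pmf (alt_group n) L y * (if map y s = t then 1 else 0)" for y
    using subprod_pmf_nonzero_imp_fixes[OF _ assms(2)] assms(3)
    by (cases "subprod_pmf (alt_group n) L y = 0") auto
  show ?thesis unfolding prob_maps_to_def True eq by simp
next
  case False
  have "subprod_pmf (alt_group n) L y * (if map y (s @ [p]) = t @ [b] then 1 else 0) = 0" for y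
    using subprod_pmf_nonzero_imp_fixes[OF _ assms(2)] assms(3) False by fastforce
  then show ?thesis unfolding prob_maps_to_def using False by (simp only: sum.neutral_const if_False)
qed

lemma prob_maps_to_eq_0_if_set_invariant:
  assumes "\<And>a. a \<in> set L \<Longrightarrow> fst a ` set s = set s" "set t \<noteq> set s"
  shows "prob_maps_to n L s t = 0"
  unfolding prob_maps_to_def
proof (intro sum.neutral ballI)
  fix y
  show "subprod_pmf (alt_group n) L y * (if map y s = t then 1 else 0) = 0"
  proof (cases "subprod_pmf (alt_group n) L y = 0")
    case False
    then have "y ` set s = set s" by (rule subprod_pmf_nonzero_imp_image_eq) (rule assms(1))
    then have "map y s \<noteq> t" using assms(2) by auto
    then show ?thesis by simp
  qed simp
qed

lemma inv_Alt_mem_iff: "h \<in> Alt n \<Longrightarrow> inv' h j \<in> A \<longleftrightarrow> j \<in> h ` A"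
  by (metis Alt_apply_inv Alt_inv_apply image_iff)

lemma prob_maps_to_Cons_swap:
  assumes "fst ` set L \<subseteq> Alt n" "h \<in> Alt n" "h ` B = A" "A \<inter> B = {}"
    "\<And>j. prob_maps_to n L s [j] = (if j \<in> B then c else 0)"
  shows "prob_maps_to n ((h, 1 / 2) # L) s [j] = (if j \<in> A \<union> B then c / 2 else 0)"
proof -
  have "prob_maps_to n ((h, 1 / 2) # L) s [j] = (if j \<in> B then c else 0) / 2 + (if j \<in> A then c else 0) / 2"
    using prob_maps_to_Cons[OF assms(1,2)] assms(5) inv_Alt_mem_iff[OF assms(2)] assms(3) by simp
  then show ?thesis using assms(4) by auto
qed

section \<open>Spreading one point uniformly over an interval\<close>

definition swap_halves :: "nat \<Rightarrow> nat \<Rightarrow> nat \<Rightarrow> nat" where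
  "swap_halves lo k x =
    (if lo \<le> x \<and> x < lo + k then x + k else if lo + k \<le> x \<and> x < lo + 2 * k then x - k else x)"

lemma swap_halves_swap_halves [simp]: "swap_halves lo k (swap_halves lo k x) = x"
  unfolding swap_halves_def by auto

lemma swap_halves_permutes: "swap_halves lo k permutes {lo..<lo + 2 * k}"
proof (rule bij_imp_permutes)
  have "swap_halves lo k ` {lo..<lo + 2 * k} \<subseteq> {lo..<lo + 2 * k}"
    unfolding swap_halves_def by auto
  then have "swap_halves lo k ` {lo..<lo + 2 * k} = {lo..<lo + 2 * k}"
    by (metis image_subset_iff subset_antisym swap_halves_swap_halves image_eqI subsetI)
  moreover have "inj_on (swap_halves lo k) {lo..<lo + 2 * k}"
    by (metis inj_onI swap_halves_swap_halves)
  ultimately show "bij_betw (swap_halves lo k) {lo..<lo + 2 * k} {lo..<lo + 2 * k}"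
    by (simp add: bij_betw_def)
qed (auto simp: swap_halves_def)

lemma swap_halves_image_upper: "swap_halves lo k ` {lo + k..<lo + 2 * k} = {lo..<lo + k}"
proof
  show "swap_halves lo k ` {lo + k..<lo + 2 * k} \<subseteq> {lo..<lo + k}"
    unfolding swap_halves_def by auto
  show "{lo..<lo + k} \<subseteq> swap_halves lo k ` {lo + k..<lo + 2 * k}"
  proof
    fix x assume "x \<in> {lo..<lo + k}"
    then have "swap_halves lo k x \<in> {lo + k..<lo + 2 * k}" unfolding swap_halves_def by auto
    then show "x \<in> swap_halves lo k ` {lo + k..<lo + 2 * k}" by (metis image_eqI swap_halves_swap_halves)
  qed
qed

definition even_swap_halves :: "nat \<Rightarrow> nat \<Rightarrow> nat \<Rightarrow> nat" where
  "even_swap_halves lo k =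
    (if evenperm (swap_halves lo k) then swap_halves lo k
     else swap_halves lo k \<circ> Transposition.transpose (lo + k) (lo + k + 1))"

lemma
  assumes "2 \<le> k"
  shows even_swap_halves_permutes: "even_swap_halves lo k permutes {lo..<lo + 2 * k}"
    and evenperm_even_swap_halves: "evenperm (even_swap_halves lo k)"
    and even_swap_halves_image_upper: "even_swap_halves lo k ` {lo + k..<lo + 2 * k} = {lo..<lo + k}"
proof -
  have T: "Transposition.transpose (lo + k) (lo + k + 1) permutes {lo + k..<lo + 2 * k}"
    using assms by (intro permutes_swap_id) auto
  then have "Transposition.transpose (lo + k) (lo + k + 1) permutes {lo..<lo + 2 * k}"
    by (rule permutes_subset) auto
  from permutes_compose[OF this swap_halves_permutes]
  show "even_swap_halves lo k permutes {lo..<lo + 2 * k}"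
    unfolding even_swap_halves_def using swap_halves_permutes by simp
  have "permutation (swap_halves lo k)"
    using swap_halves_permutes permutation_permutes by blast
  then show "evenperm (even_swap_halves lo k)"
    unfolding even_swap_halves_def using assms
    by (simp add: evenperm_comp permutation_swap_id evenperm_swap)
  have "(swap_halves lo k \<circ> Transposition.transpose (lo + k) (lo + k + 1)) ` {lo + k..<lo + 2 * k} =
      swap_halves lo k ` {lo + k..<lo + 2 * k}"
    unfolding image_comp[symmetric] permutes_image[OF T] ..
  then show "even_swap_halves lo k ` {lo + k..<lo + 2 * k} = {lo..<lo + k}"
    unfolding even_swap_halves_def using swap_halves_image_upper by simp
qed

text \<open>The transposition of \<open>lo\<close> and \<open>lo + 1\<close> only repairs the parity; it does not move the top point.\<close>

definition step_down :: "nat \<Rightarrow> nat \<Rightarrow> nat \<Rightarrow> nat" where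
  "step_down lo len =
    Transposition.transpose (lo + len - 1) (lo + len - 2) \<circ> Transposition.transpose lo (lo + 1)"

lemma
  assumes "3 \<le> len"
  shows step_down_permutes: "step_down lo len permutes {lo..<lo + len}"
    and evenperm_step_down: "evenperm (step_down lo len)"
    and step_down_top: "step_down lo len (lo + len - 1) = lo + len - 2"
  using assms unfolding step_down_def
  by (auto intro!: permutes_compose permutes_swap_id simp: evenperm_comp permutation_swap_id evenperm_swap)

text \<open>The only odd factor needed is the transposition of a length-two interval; it is made even
  by composing with \<open>fx lo\<close>, an odd permutation that does not move the points above the interval.\<close>

function spread :: "(nat \<Rightarrow> nat \<Rightarrow> nat) \<Rightarrow> nat \<Rightarrow> nat \<Rightarrow> ((nat \<Rightarrow> nat) \<times> real) list" where
  "spread fx lo len =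
    (if len \<le> 1 then []
     else if len = 2 then [(Transposition.transpose lo (lo + 1) \<circ> fx lo, 1 / 2)]
     else if even len then (even_swap_halves lo (len div 2), 1 / 2) # spread fx (lo + len div 2) (len div 2)
     else spread fx lo (len - 1) @ [(step_down lo len, real (len - 1) / real len)])"
  by pat_completeness auto
termination by (relation "Wellfounded.measure (\<lambda>(fx, lo, len). len)") auto

declare spread.simps [simp del]

lemma spread_le_1: "len \<le> 1 \<Longrightarrow> spread fx lo len = []"
  by (subst spread.simps) simp

lemma spread_2: "spread fx lo 2 = [(Transposition.transpose lo (lo + 1) \<circ> fx lo, 1 / 2)]"
  by (subst spread.simps) simp

lemma spread_even:
  "2 \<le> k \<Longrightarrow> spread fx lo (2 * k) = (even_swap_halves lo k, 1 / 2) # spread fx (lo + k) k"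
  by (subst spread.simps) simp

lemma spread_odd:
  "1 \<le> k \<Longrightarrow>
    spread fx lo (2 * k + 1) = spread fx lo (2 * k) @ [(step_down lo (2 * k + 1), real (2 * k) / real (2 * k + 1))]"
  by (subst spread.simps) simp

lemma spread_length_induct [case_names small two even odd]:
  fixes len :: nat
  assumes "\<And>len. len \<le> 1 \<Longrightarrow> P len" "P 2" "\<And>k. 2 \<le> k \<Longrightarrow> P k \<Longrightarrow> P (2 * k)"
    "\<And>k. 1 \<le> k \<Longrightarrow> P (2 * k) \<Longrightarrow> P (2 * k + 1)"
  shows "P len"
proof (induction len rule: less_induct)
  case (less len)
  show ?case
  proof (cases "len \<le> 1 \<or> len = 2")
    case True
    then show ?thesis using assms(1,2) by auto
  next
    case False
    show ?thesis
    proof (cases "even len")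
      case True
      then obtain k where "len = 2 * k" by blast
      with False show ?thesis using assms(3) less[of k] by auto
    next
      case odd: False
      then obtain k where "len = 2 * k + 1" by (blast elim: oddE)
      with False show ?thesis using assms(4) less[of "2 * k"] by auto
    qed
  qed
qed

lemma spread_factor_cases:
  "a \<in> set (spread fx lo len) \<Longrightarrow>
    (\<exists>lo'. lo \<le> lo' \<and> lo' + 2 \<le> lo + len \<and> (lo' = lo \<longrightarrow> len \<le> 3) \<and>
       a = (Transposition.transpose lo' (lo' + 1) \<circ> fx lo', 1 / 2))
    \<or> (fst a permutes {lo..<lo + len} \<and> evenperm (fst a) \<and> 0 \<le> snd a \<and> snd a \<le> 1)"
proof (induction len arbitrary: lo rule: spread_length_induct)
  case (small len)
  then show ?case by (simp add: spread_le_1)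
next
  case two
  then show ?case by (intro disjI1 exI[of _ lo]) (simp add: spread_2 comp_def)
next
  case (even k)
  from even.prems consider "a = (even_swap_halves lo k, 1 / 2)" | "a \<in> set (spread fx (lo + k) k)"
    using even.hyps by (auto simp: spread_even)
  then show ?case
  proof cases
    case 1
    then show ?thesis using even.hyps even_swap_halves_permutes evenperm_even_swap_halves by simp
  next
    case 2
    from even.IH[OF this] show ?thesis
    proof (elim disjE conjE exE)
      fix lo' assume "lo + k \<le> lo'" "lo' + 2 \<le> lo + k + k"
        "a = (Transposition.transpose lo' (lo' + 1) \<circ> fx lo', 1 / 2)"
      then show ?thesis using even.hyps by (intro disjI1 exI[of _ lo']) (simp add: comp_def)
    next
      assume "fst a permutes {lo + k..<lo + k + k}" "evenperm (fst a)" "0 \<le> snd a" "snd a \<le> 1"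
      moreover have "{lo + k..<lo + k + k} \<subseteq> {lo..<lo + 2 * k}" by auto
      ultimately show ?thesis by (simp add: permutes_subset)
    qed
  qed
next
  case (odd k)
  from odd.prems consider "a = (step_down lo (2 * k + 1), real (2 * k) / real (2 * k + 1))"
    | "a \<in> set (spread fx lo (2 * k))"
    unfolding spread_odd[OF odd.hyps] by auto
  then show ?case
  proof cases
    case 1
    have "3 \<le> 2 * k + 1" using odd.hyps by simp
    then show ?thesis
      using 1 step_down_permutes[of "2 * k + 1" lo] evenperm_step_down[of "2 * k + 1" lo] by simp
  next
    case 2
    from odd.IH[OF this] show ?thesis
    proof (elim disjE conjE exE)
      fix lo' assume "lo \<le> lo'" "lo' + 2 \<le> lo + 2 * k" "lo' = lo \<longrightarrow> 2 * k \<le> 3"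
        "a = (Transposition.transpose lo' (lo' + 1) \<circ> fx lo', 1 / 2)"
      then show ?thesis by (intro disjI1 exI[of _ lo']) (auto simp: comp_def)
    next
      assume "fst a permutes {lo..<lo + 2 * k}" "evenperm (fst a)" "0 \<le> snd a" "snd a \<le> 1"
      moreover have "{lo..<lo + 2 * k} \<subseteq> {lo..<lo + (2 * k + 1)}" by auto
      ultimately show ?thesis by (simp add: permutes_subset)
    qed
  qed
qed

definition parity_fixer :: "(nat \<Rightarrow> nat \<Rightarrow> nat) \<Rightarrow> nat \<Rightarrow> nat set \<Rightarrow> nat \<Rightarrow> bool" where
  "parity_fixer fx R S lo0 \<longleftrightarrow>
    (\<forall>lo. lo0 \<le> lo \<and> lo + 1 \<le> R \<longrightarrow>
       fx lo permutes S \<and> \<not> evenperm (fx lo) \<and> fx lo ` {1..R} = {1..R} \<and>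
       (\<forall>x. lo < x \<and> x \<le> R \<longrightarrow> fx lo x = x))"

text \<open>The alternative \<open>lo0 \<le> lo + 1 \<and> 4 \<le> len\<close> lets a fixer that needs \<open>lo \<ge> 2\<close> serve a
  spread starting at 1: by \<open>spread_factor_cases\<close>, a length-two interval starts at \<open>lo\<close> itself
  only if \<open>len \<le> 3\<close>.\<close>

lemma spread_factor_props:
  assumes fx: "parity_fixer fx R S lo0" and S: "{1..R} \<subseteq> S" "finite S"
    and lo: "1 \<le> lo" "lo + len \<le> R + 1" "lo0 \<le> lo \<or> lo0 \<le> lo + 1 \<and> 4 \<le> len"
    and a: "a \<in> set (spread fx lo len)"
  shows "fst a permutes S \<and> evenperm (fst a) \<and> fst a ` {1..R} = {1..R} \<and>
    (\<forall>x. lo + len \<le> x \<and> x \<le> R \<longrightarrow> fst a x = x) \<and> 0 \<le> snd a \<and> snd a \<le> 1"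
  using spread_factor_cases[OF a]
proof (elim disjE exE conjE)
  fix lo' assume lo': "lo \<le> lo'" "lo' + 2 \<le> lo + len" "lo' = lo \<longrightarrow> len \<le> 3"
    and a: "a = (Transposition.transpose lo' (lo' + 1) \<circ> fx lo', 1 / 2)"
  have "lo0 \<le> lo'" using lo lo' by auto
  then have F: "fx lo' permutes S" "\<not> evenperm (fx lo')" "fx lo' ` {1..R} = {1..R}"
    "\<And>x. lo' < x \<Longrightarrow> x \<le> R \<Longrightarrow> fx lo' x = x"
    using fx lo lo' unfolding parity_fixer_def by auto
  have T: "Transposition.transpose lo' (lo' + 1) permutes {1..R}"
    using lo lo' by (intro permutes_swap_id) auto
  have "Transposition.transpose lo' (lo' + 1) \<circ> fx lo' permutes S"
    using permutes_compose[OF F(1) permutes_subset[OF T S(1)]] .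
  moreover have "evenperm (Transposition.transpose lo' (lo' + 1) \<circ> fx lo')"
  proof -
    have "permutation (fx lo')" using F(1) S(2) permutation_permutes by blast
    then show ?thesis using F(2) by (simp add: evenperm_comp permutation_swap_id evenperm_swap)
  qed
  moreover have "(Transposition.transpose lo' (lo' + 1) \<circ> fx lo') ` {1..R} = {1..R}"
    unfolding image_comp[symmetric] F(3) permutes_image[OF T] ..
  moreover have "(Transposition.transpose lo' (lo' + 1) \<circ> fx lo') x = x"
    if "lo + len \<le> x" "x \<le> R" for x
    using that lo' F(4)[of x] by auto
  ultimately show ?thesis unfolding a by simp
next
  assume a: "fst a permutes {lo..<lo + len}" "evenperm (fst a)" "0 \<le> snd a" "snd a \<le> 1"
  have "{lo..<lo + len} \<subseteq> {1..R}" using lo by auto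
  from permutes_subset[OF a(1) this] have R: "fst a permutes {1..R}" .
  have "fst a permutes S" "fst a ` {1..R} = {1..R}"
    using permutes_subset[OF R S(1)] permutes_image[OF R] by auto
  then show ?thesis using a permutes_not_in[OF a(1)] by auto
qed

lemma spread_factors_in_Alt:
  assumes "parity_fixer fx R S lo0" "{1..R} \<subseteq> S" "S \<subseteq> {1..n}"
    "1 \<le> lo" "lo + len \<le> R + 1" "lo0 \<le> lo \<or> lo0 \<le> lo + 1 \<and> 4 \<le> len"
  shows "fst ` set (spread fx lo len) \<subseteq> Alt n"
proof (rule image_subsetI)
  fix a assume "a \<in> set (spread fx lo len)"
  then have "fst a permutes S" "evenperm (fst a)"
    using spread_factor_props[OF assms(1,2) finite_subset[OF assms(3)] assms(4-6)] by auto
  then show "fst a \<in> Alt n" using Alt_memI[OF _ assms(3)] by blast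
qed

lemma spread_uniform:
  assumes fx: "parity_fixer fx R S lo0" and S: "{1..R} \<subseteq> S" "S \<subseteq> {1..n}"
  shows "1 \<le> lo \<Longrightarrow> lo + len \<le> R + 1 \<Longrightarrow> 1 \<le> len \<Longrightarrow> lo0 \<le> lo \<or> lo0 \<le> lo + 1 \<and> 4 \<le> len \<Longrightarrow>
    prob_maps_to n (spread fx lo len) [lo + len - 1] [j] = (if lo \<le> j \<and> j < lo + len then 1 / len else 0)"
proof (induction len arbitrary: lo j rule: spread_length_induct)
  case (small len)
  then show ?case by (auto simp: spread_le_1 prob_maps_to_Nil)
next
  case two
  let ?h = "Transposition.transpose lo (lo + 1) \<circ> fx lo"
  have "?h \<in> Alt n" using spread_factors_in_Alt[OF fx S, of lo 2] two.prems by (simp add: spread_2)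
  moreover have "fx lo (lo + 1) = lo + 1" using fx two.prems unfolding parity_fixer_def by auto
  ultimately show ?case by (auto simp: spread_2 prob_maps_to_single)
next
  case (even k)
  let ?L = "spread fx (lo + k) k"
  have "fst ` set (spread fx lo (2 * k)) \<subseteq> Alt n"
    using spread_factors_in_Alt[OF fx S] even.prems by blast
  then have h: "even_swap_halves lo k \<in> Alt n" and L: "fst ` set ?L \<subseteq> Alt n"
    unfolding spread_even[OF even.hyps(1)] by auto
  have "prob_maps_to n ?L [lo + 2 * k - 1] [j'] = (if j' \<in> {lo + k..<lo + 2 * k} then 1 / k else 0)" for j'
    using even.IH[of "lo + k" j'] even.prems even.hyps by (auto simp: mult_2 add.assoc)
  then have "prob_maps_to n ((even_swap_halves lo k, 1 / 2) # ?L) [lo + 2 * k - 1] [j] =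
      (if j \<in> {lo..<lo + k} \<union> {lo + k..<lo + 2 * k} then 1 / k / 2 else 0)"
    using even_swap_halves_image_upper[OF even.hyps(1)] by (intro prob_maps_to_Cons_swap[OF L h]) auto
  then show ?case unfolding spread_even[OF even.hyps(1)] by auto
next
  case (odd k)
  let ?L = "spread fx lo (2 * k)" and ?h = "step_down lo (2 * k + 1)"
  let ?q = "real (2 * k) / real (2 * k + 1)"
  have "fst ` set (spread fx lo (2 * k + 1)) \<subseteq> Alt n"
    using spread_factors_in_Alt[OF fx S] odd.prems by blast
  then have h: "?h \<in> Alt n" and L: "fst ` set ?L \<subseteq> Alt n"
    unfolding spread_odd[OF odd.hyps] by auto
  have cond: "lo0 \<le> lo \<or> lo0 \<le> lo + 1 \<and> 4 \<le> 2 * k" using odd.prems by auto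
  have "fst a (lo + 2 * k) = lo + 2 * k" if "a \<in> set ?L" for a
    using spread_factor_props[OF fx S(1) finite_subset[OF S(2)] _ _ cond that] odd.prems by auto
  then have top: "prob_maps_to n ?L [lo + 2 * k] [j] = (if j = lo + 2 * k then 1 else 0)"
    using prob_maps_to_fixed_point[OF L] by auto
  have "?h (lo + 2 * k) = lo + 2 * k - 1" using step_down_top[of "2 * k + 1" lo] odd.hyps by simp
  then have below: "prob_maps_to n ?L [?h (lo + 2 * k)] [j] = (if lo \<le> j \<and> j < lo + 2 * k then 1 / (2 * k) else 0)"
    using odd.IH[of lo j] odd.prems odd.hyps cond by auto
  have "prob_maps_to n (?L @ [(?h, ?q)]) [lo + 2 * k] [j] =
      (1 - ?q) * (if j = lo + 2 * k then 1 else 0) + ?q * (if lo \<le> j \<and> j < lo + 2 * k then 1 / (2 * k) else 0)"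
    using prob_maps_to_snoc[OF L h] top below by simp
  also have "\<dots> = (if lo \<le> j \<and> j < lo + (2 * k + 1) then 1 / (2 * k + 1) else 0)"
  proof -
    have "1 - ?q = 1 / (2 * k + 1)" "?q * (1 / (2 * k)) = 1 / (2 * k + 1)"
      using odd.hyps by (simp_all add: field_simps)
    then show ?thesis by auto
  qed
  finally show ?case unfolding spread_odd[OF odd.hyps] by simp
qed

function spread_length :: "nat \<Rightarrow> nat" where
  "spread_length len =
    (if len \<le> 1 then 0 else if even len then spread_length (len div 2) + 1 else spread_length (len - 1) + 1)"
  by pat_completeness auto
termination by (relation "Wellfounded.measure id") auto

declare spread_length.simps [simp del]

lemma spread_length_le_1 [simp]: "len \<le> 1 \<Longrightarrow> spread_length len = 0"
  by (subst spread_length.simps) simp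

lemma spread_length_even: "1 \<le> k \<Longrightarrow> spread_length (2 * k) = spread_length k + 1"
  by (subst spread_length.simps) simp

lemma spread_length_odd: "1 \<le> k \<Longrightarrow> spread_length (2 * k + 1) = spread_length (2 * k) + 1"
  by (subst spread_length.simps) simp

lemma length_spread: "length (spread fx lo len) = spread_length len"
proof (induction len arbitrary: lo rule: spread_length_induct)
  case two
  then show ?case using spread_length_even[of 1] by (simp add: spread_2)
next
  case (odd k)
  then show ?case unfolding spread_odd[OF odd.hyps] spread_length_odd[OF odd.hyps] by simp
qed (simp_all add: spread_le_1 spread_even spread_length_even)

section \<open>A uniform random even permutation\<close>

definition spread_top :: "nat \<Rightarrow> ((nat \<Rightarrow> nat) \<times> real) list" where
  "spread_top len = spread (\<lambda>lo. Transposition.transpose lo (lo - 1)) 1 len"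

definition spread_low :: "nat \<Rightarrow> nat \<Rightarrow> ((nat \<Rightarrow> nat) \<times> real) list" where
  "spread_low n m = spread (\<lambda>_. Transposition.transpose (n - 1) n) 1 m"

lemma parity_fixer_transpose_below: "parity_fixer (\<lambda>lo. Transposition.transpose lo (lo - 1)) R {1..R} 2"
  unfolding parity_fixer_def
  by (auto intro!: permutes_swap_id permutes_image simp: evenperm_swap)

lemma parity_fixer_transpose_spare:
  assumes "m + 2 \<le> n"
  shows "parity_fixer (\<lambda>_. Transposition.transpose (n - 1) n) m ({1..m} \<union> {n - 1, n}) 1"
proof -
  have "Transposition.transpose (n - 1) n ` {1..m} = id ` {1..m}"
    by (rule image_cong) (use assms in auto)
  then show ?thesis
    unfolding parity_fixer_def using assms by (auto intro!: permutes_swap_id simp: evenperm_swap)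
qed

lemma spread_top_factor_props:
  assumes "4 \<le> len" "a \<in> set (spread_top len)"
  shows "fst a permutes {1..len} \<and> evenperm (fst a) \<and> 0 \<le> snd a \<and> snd a \<le> 1"
  using spread_factor_props[OF parity_fixer_transpose_below _ _ _ _ _ assms(2)[unfolded spread_top_def]]
    assms(1) by auto

lemma spread_top_factors_in_Alt: "4 \<le> len \<Longrightarrow> len \<le> n \<Longrightarrow> fst ` set (spread_top len) \<subseteq> Alt n"
  using spread_factors_in_Alt[OF parity_fixer_transpose_below, of len n 1 len]
  unfolding spread_top_def by auto

lemma spread_top_uniform:
  "4 \<le> len \<Longrightarrow> len \<le> n \<Longrightarrow>
    prob_maps_to n (spread_top len) [len] [j] = (if 1 \<le> j \<and> j \<le> len then 1 / len else 0)"
  using spread_uniform[OF parity_fixer_transpose_below, of len n 1 len j]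
  unfolding spread_top_def by auto

lemma spread_low_factor_props:
  assumes "m + 2 \<le> n" "a \<in> set (spread_low n m)"
  shows "fst a \<in> Alt n \<and> 0 \<le> snd a \<and> snd a \<le> 1 \<and> fst a permutes ({1..m} \<union> {n - 1, n}) \<and>
    fst a ` {1..m} = {1..m}"
proof -
  have S: "{1..m} \<union> {n - 1, n} \<subseteq> {1..n}" using assms(1) by auto
  have "fst a permutes {1..m} \<union> {n - 1, n} \<and> evenperm (fst a) \<and> fst a ` {1..m} = {1..m} \<and>
      0 \<le> snd a \<and> snd a \<le> 1"
    using spread_factor_props[OF parity_fixer_transpose_spare[OF assms(1)] _ _ _ _ _
      assms(2)[unfolded spread_low_def]] by auto
  then show ?thesis using Alt_memI[OF _ S] by auto
qed

lemma spread_low_uniform: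
  assumes "m + 2 \<le> n" "j \<in> {1..m}"
  shows "prob_maps_to n (spread_low n m) [m] [j] = 1 / m"
proof -
  have S: "{1..m} \<union> {n - 1, n} \<subseteq> {1..n}" using assms(1) by auto
  show ?thesis
    using spread_uniform[OF parity_fixer_transpose_spare[OF assms(1)] _ S, of 1 m j] assms(2)
    unfolding spread_low_def by auto
qed

lemma prob_maps_to_arrangement_snoc:
  assumes B: "fst ` set B \<subseteq> Alt n"
    and B_fixes: "\<And>a. a \<in> set B \<Longrightarrow> fst a (Suc m) = Suc m"
    and B_uniform: "\<And>t. length t = m \<Longrightarrow> set t = {1..m} \<Longrightarrow> prob_maps_to n B [1..<Suc m] t = c"
    and z: "z \<in> Alt n" "z ` {1..Suc m} = {1..Suc m}"
    and t: "length t = m" "set t = {1..Suc m} - {b}" "b \<in> {1..Suc m}"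
  shows "prob_maps_to n B ([1..<Suc m] @ [Suc m]) (map (inv' z) t @ [inv' z b]) = (if z (Suc m) = b then c else 0)"
proof (cases "z (Suc m) = b")
  case True
  then have zb: "inv' z b = Suc m" using Alt_inv_apply[OF z(1)] by auto
  have "inv' z ` {1..Suc m} = inv' z ` z ` {1..Suc m}" using z(2) by simp
  also have "\<dots> = {1..Suc m}" using Alt_inv_apply[OF z(1)] by (simp add: image_comp)
  finally have "set (map (inv' z) t) = {1..Suc m} - {Suc m}"
    using t zb image_set_diff[OF Alt_inj[OF alt_group_inv_closed[OF z(1)]]] by simp
  then have "set (map (inv' z) t) = {1..m}" by auto
  moreover have "length (map (inv' z) t) = m" using t by simp
  ultimately have "prob_maps_to n B [1..<Suc m] (map (inv' z) t) = c" using B_uniform by blast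
  then show ?thesis using prob_maps_to_snoc_fixed_point[OF B B_fixes] True zb t by simp
next
  case False
  then have "inv' z b \<noteq> Suc m" using Alt_apply_inv[OF z(1), of b] by auto
  then show ?thesis using prob_maps_to_snoc_fixed_point[OF B B_fixes] False t by simp
qed

lemma prob_maps_to_append_arrangement:
  assumes A: "fst ` set A \<subseteq> Alt n" and B: "fst ` set B \<subseteq> Alt n"
    and A_invariant: "\<And>a. a \<in> set A \<Longrightarrow> fst a ` {1..Suc m} = {1..Suc m}"
    and B_fixes: "\<And>a. a \<in> set B \<Longrightarrow> fst a (Suc m) = Suc m"
    and A_top: "\<And>j. j \<in> {1..Suc m} \<Longrightarrow> prob_maps_to n A [Suc m] [j] = 1 / Suc m"
    and B_uniform: "\<And>t. length t = m \<Longrightarrow> set t = {1..m} \<Longrightarrow> prob_maps_to n B [1..<Suc m] t = c"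
    and t: "length t = Suc m" "set t = {1..Suc m}"
  shows "prob_maps_to n (A @ B) [1..<Suc (Suc m)] t = c / Suc m"
proof -
  obtain t' b where tb: "t = t' @ [b]" using t(1) by (cases t rule: rev_cases) auto
  have "distinct t" using t by (simp add: card_distinct)
  then have b: "length t' = m" "set t' = {1..Suc m} - {b}" "b \<in> {1..Suc m}" using t tb by auto
  have "prob_maps_to n (A @ B) [1..<Suc (Suc m)] t = (\<Sum>z\<in>Alt n. subprod_pmf (alt_group n) A z *
      prob_maps_to n B ([1..<Suc m] @ [Suc m]) (map (inv' z) t' @ [inv' z b]))"
    using prob_maps_to_append[OF A B] tb by simp
  also have "\<dots> = (\<Sum>z\<in>Alt n. c * (subprod_pmf (alt_group n) A z * (if map z [Suc m] = [b] then 1 else 0)))"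
  proof (intro sum.cong refl)
    fix z assume z: "z \<in> Alt n"
    show "subprod_pmf (alt_group n) A z * prob_maps_to n B ([1..<Suc m] @ [Suc m]) (map (inv' z) t' @ [inv' z b])
        = c * (subprod_pmf (alt_group n) A z * (if map z [Suc m] = [b] then 1 else 0))"
    proof (cases "subprod_pmf (alt_group n) A z = 0")
      case False
      then have "z ` {1..Suc m} = {1..Suc m}" by (rule subprod_pmf_nonzero_imp_image_eq) (rule A_invariant)
      then show ?thesis using prob_maps_to_arrangement_snoc[OF B B_fixes B_uniform z _ b] by simp
    qed simp
  qed
  also have "\<dots> = c * prob_maps_to n A [Suc m] [b]"
    unfolding prob_maps_to_def by (simp add: sum_distrib_left)
  also have "\<dots> = c / Suc m" using A_top b by simp
  finally show ?thesis .
qed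

fun low_factors :: "nat \<Rightarrow> nat \<Rightarrow> ((nat \<Rightarrow> nat) \<times> real) list" where
  "low_factors n 0 = []"
| "low_factors n (Suc m) = spread_low n (Suc m) @ low_factors n m"

lemma low_factor_props:
  "m + 2 \<le> n \<Longrightarrow> a \<in> set (low_factors n m) \<Longrightarrow>
    fst a \<in> Alt n \<and> 0 \<le> snd a \<and> snd a \<le> 1 \<and> fst a permutes ({1..m} \<union> {n - 1, n}) \<and>
    fst a ` {1..m} = {1..m}"
proof (induction m)
  case (Suc m)
  show ?case
  proof (cases "a \<in> set (spread_low n (Suc m))")
    case True
    show ?thesis by (rule spread_low_factor_props[OF Suc.prems(1) True])
  next
    case False
    then have "a \<in> set (low_factors n m)" using Suc.prems(2) by simp
    then have IH: "fst a \<in> Alt n \<and> 0 \<le> snd a \<and> snd a \<le> 1 \<and> fst a permutes ({1..m} \<union> {n - 1, n}) \<and>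
        fst a ` {1..m} = {1..m}"
      using Suc.IH Suc.prems(1) by simp
    have "Suc m \<notin> {1..m} \<union> {n - 1, n}" using Suc.prems(1) by auto
    then have "fst a (Suc m) = Suc m" using IH permutes_not_in by metis
    moreover have "{1..Suc m} = insert (Suc m) {1..m}" by auto
    moreover have "{1..m} \<union> {n - 1, n} \<subseteq> {1..Suc m} \<union> {n - 1, n}" by auto
    then have "fst a permutes ({1..Suc m} \<union> {n - 1, n})" using IH permutes_subset by metis
    ultimately show ?thesis using IH by simp
  qed
qed simp

lemma low_factors_uniform:
  "m + 2 \<le> n \<Longrightarrow> length t = m \<Longrightarrow> set t = {1..m} \<Longrightarrow>
    prob_maps_to n (low_factors n m) [1..<Suc m] t = 1 / fact m"
proof (induction m arbitrary: t)
  case 0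
  then show ?case by (simp add: prob_maps_to_Nil)
next
  case (Suc m)
  have "prob_maps_to n (spread_low n (Suc m) @ low_factors n m) [1..<Suc (Suc m)] t = 1 / fact m / Suc m"
  proof (rule prob_maps_to_append_arrangement)
    have "m + 2 \<le> n" using Suc.prems(1) by simp
    then show "fst ` set (spread_low n (Suc m)) \<subseteq> Alt n" "fst ` set (low_factors n m) \<subseteq> Alt n"
      using spread_low_factor_props[OF Suc.prems(1)] low_factor_props by blast+
    show "fst a ` {1..Suc m} = {1..Suc m}" if "a \<in> set (spread_low n (Suc m))" for a
      using spread_low_factor_props[OF Suc.prems(1) that] by blast
    show "fst a (Suc m) = Suc m" if "a \<in> set (low_factors n m)" for a
    proof -
      have "fst a permutes ({1..m} \<union> {n - 1, n})" using low_factor_props[OF _ that] Suc.prems(1) by simp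
      moreover have "Suc m \<notin> {1..m} \<union> {n - 1, n}" using Suc.prems(1) by auto
      ultimately show ?thesis by (rule permutes_not_in)
    qed
    show "prob_maps_to n (spread_low n (Suc m)) [Suc m] [j] = 1 / Suc m" if "j \<in> {1..Suc m}" for j
      using spread_low_uniform[OF Suc.prems(1) that] .
    show "prob_maps_to n (low_factors n m) [1..<Suc m] t' = 1 / fact m"
      if "length t' = m" "set t' = {1..m}" for t'
      using Suc.IH Suc.prems(1) that by simp
  qed (use Suc.prems in auto)
  then show ?case by simp
qed

lemma spread_top_pair:
  assumes n: "5 \<le> n" and ab: "a \<noteq> b" "a \<in> {1..n}" "b \<in> {1..n}"
  shows "prob_maps_to n (spread_top n @ spread_top (n - 1)) [n - 1, n] [a, b] = 1 / (real n * real (n - 1))"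
proof -
  let ?T1 = "spread_top n" and ?T2 = "spread_top (n - 1)"
  have T1: "fst ` set ?T1 \<subseteq> Alt n" and T2: "fst ` set ?T2 \<subseteq> Alt n"
    using n spread_top_factors_in_Alt by auto
  have T2_fixes: "fst c n = n" if "c \<in> set ?T2" for c
  proof -
    have "fst c permutes {1..n - 1}" using spread_top_factor_props[OF _ that] n by simp
    then show ?thesis by (rule permutes_not_in) (use n in simp)
  qed
  have "prob_maps_to n (?T1 @ ?T2) [n - 1, n] [a, b] = (\<Sum>z\<in>Alt n. subprod_pmf (alt_group n) ?T1 z *
      prob_maps_to n ?T2 ([n - 1] @ [n]) ([inv' z a] @ [inv' z b]))"
    using prob_maps_to_append[OF T1 T2] by simp
  also have "\<dots> = (\<Sum>z\<in>Alt n. subprod_pmf (alt_group n) ?T1 z * (if map z [n] = [b] then 1 else 0) / real (n - 1))"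
  proof (intro sum.cong refl)
    fix z assume z: "z \<in> Alt n"
    have "prob_maps_to n ?T2 ([n - 1] @ [n]) ([inv' z a] @ [inv' z b]) =
        (if inv' z b = n then prob_maps_to n ?T2 [n - 1] [inv' z a] else 0)"
      using prob_maps_to_snoc_fixed_point[OF T2 T2_fixes, of "[n - 1]" "[inv' z a]" "inv' z b"] by simp
    also have "\<dots> = (if z n = b then 1 / real (n - 1) else 0)"
    proof (cases "z n = b")
      case True
      then have "inv' z b = n" using Alt_inv_apply[OF z] by auto
      moreover have "inv' z a \<in> {1..n}"
        using ab permutes_in_image[OF Alt_permutes[OF alt_group_inv_closed[OF z]]] by auto
      moreover have "inv' z a \<noteq> n" using ab True Alt_apply_inv[OF z, of a] by auto
      ultimately show ?thesis using True n spread_top_uniform[of "n - 1" n "inv' z a"] by auto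
    next
      case False
      then have "inv' z b \<noteq> n" using Alt_apply_inv[OF z, of b] by auto
      then show ?thesis using False by simp
    qed
    finally show "subprod_pmf (alt_group n) ?T1 z * prob_maps_to n ?T2 ([n - 1] @ [n]) ([inv' z a] @ [inv' z b]) =
        subprod_pmf (alt_group n) ?T1 z * (if map z [n] = [b] then 1 else 0) / real (n - 1)"
      by simp
  qed
  also have "\<dots> = prob_maps_to n ?T1 [n] [b] / real (n - 1)"
    unfolding prob_maps_to_def by (simp add: sum_divide_distrib)
  also have "\<dots> = 1 / (real n * real (n - 1))" using spread_top_uniform[of n n b] ab n by simp
  finally show ?thesis .
qed

lemma Alt_image_initial_iff:
  assumes g: "g \<in> Alt n" and n: "2 \<le> n"
  shows "g ` {1..n - 2} = {1..n - 2} \<longleftrightarrow> {g (n - 1), g n} = {n - 1, n}"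
proof -
  have img: "g ` {1..n} = {1..n}" using permutes_image[OF Alt_permutes[OF g]] .
  have split: "{n - 1, n} = {1..n} - {1..n - 2}" "{1..n - 2} = {1..n} - {n - 1, n}" using n by auto
  show ?thesis
  proof
    assume initial: "g ` {1..n - 2} = {1..n - 2}"
    have "g ` {n - 1, n} = g ` {1..n} - g ` {1..n - 2}"
      unfolding split(1) by (rule image_set_diff[OF Alt_inj[OF g]])
    then show "{g (n - 1), g n} = {n - 1, n}" using img initial split(1) by simp
  next
    assume last_two: "{g (n - 1), g n} = {n - 1, n}"
    have "g ` {1..n - 2} = g ` {1..n} - g ` {n - 1, n}"
      unfolding split(2) by (rule image_set_diff[OF Alt_inj[OF g]])
    then show "g ` {1..n - 2} = {1..n - 2}" using img last_two split(2) by simp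
  qed
qed

lemma Alt_eq_if_eq_on_initial:
  assumes x: "x \<in> Alt n" and y: "y \<in> Alt n" and n: "2 \<le> n"
    and eq: "\<And>i. i \<in> {1..n - 2} \<Longrightarrow> y i = x i"
  shows "y = x"
proof -
  define g where "g = inv' x \<circ> y"
  have g: "g \<in> Alt n" unfolding g_def by (rule comp_in_Alt[OF alt_group_inv_closed[OF x] y])
  have "g permutes {n - 1, n}"
  proof (rule permutes_superset[OF Alt_permutes[OF g]])
    fix i assume "i \<in> {1..n} - {n - 1, n}"
    then have "i \<in> {1..n - 2}" by auto
    then show "g i = i" unfolding g_def using eq Alt_inv_apply[OF x] by simp
  qed
  moreover have "evenperm g" using g by (simp add: alt_group_carrier)
  ultimately have "g = id" using n by (auto simp: permutes_doubleton_iff evenperm_swap)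
  then have "x \<circ> g = x" by simp
  then show ?thesis unfolding g_def using permutes_inv_o(1)[OF Alt_permutes[OF x]]
    by (simp add: o_assoc)
qed

definition uniform_factors :: "nat \<Rightarrow> ((nat \<Rightarrow> nat) \<times> real) list" where
  "uniform_factors n = spread_top n @ spread_top (n - 1) @ low_factors n (n - 2)"

lemma uniform_factors_props:
  assumes n: "5 \<le> n" and a: "a \<in> set (uniform_factors n)"
  shows "fst a \<in> Alt n \<and> 0 \<le> snd a \<and> snd a \<le> 1"
proof -
  consider "a \<in> set (spread_top n)" | "a \<in> set (spread_top (n - 1))" | "a \<in> set (low_factors n (n - 2))"
    using a unfolding uniform_factors_def by auto
  then show ?thesis
  proof cases
    case 1
    then show ?thesis using spread_top_factors_in_Alt[of n n] spread_top_factor_props[of n a] n by auto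
  next
    case 2
    moreover have "4 \<le> n - 1" "n - 1 \<le> n" using n by simp_all
    ultimately show ?thesis
      using spread_top_factors_in_Alt[of "n - 1" n] spread_top_factor_props[of "n - 1" a] by auto
  next
    case 3
    then show ?thesis using low_factor_props[of "n - 2" n a] n by simp
  qed
qed

lemma subprod_pmf_eq_prob_maps_to_initial:
  assumes "2 \<le> n" "x \<in> Alt n"
  shows "subprod_pmf (alt_group n) L x = prob_maps_to n L [1..<n - 1] (map x [1..<n - 1])"
proof -
  have "set [1..<n - 1] = {1..n - 2}" by auto
  then have "map y [1..<n - 1] = map x [1..<n - 1] \<longleftrightarrow> y = x" if "y \<in> Alt n" for y
    using Alt_eq_if_eq_on_initial[OF assms(2) that assms(1)] map_eq_conv[of y "[1..<n - 1]" x] by auto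
  then have "prob_maps_to n L [1..<n - 1] (map x [1..<n - 1]) =
      (\<Sum>y\<in>Alt n. if y = x then subprod_pmf (alt_group n) L y else 0)"
    unfolding prob_maps_to_def by (intro sum.cong) auto
  then show ?thesis using assms(2) finite_Alt by simp
qed

lemma prob_maps_to_low_factors_initial:
  assumes n: "5 \<le> n" and x: "x \<in> Alt n" and z: "z \<in> Alt n"
  shows "prob_maps_to n (low_factors n (n - 2)) [1..<n - 1] (map (inv' z) (map x [1..<n - 1])) =
    ((if map z [n - 1, n] = [x (n - 1), x n] then 1 else 0) +
     (if map z [n - 1, n] = [x n, x (n - 1)] then 1 else 0)) / fact (n - 2)"
proof -
  let ?low = "low_factors n (n - 2)" and ?s = "[1..<n - 1]"
  have s: "set ?s = {1..n - 2}" using n by auto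
  have xne: "x (n - 1) \<noteq> x n" using injD[OF Alt_inj[OF x], of "n - 1" n] n by auto
  have g: "inv' z \<circ> x \<in> Alt n" by (rule comp_in_Alt[OF alt_group_inv_closed[OF z] x])
  have set_eq: "set (map (inv' z) (map x ?s)) = (inv' z \<circ> x) ` {1..n - 2}"
    using s by (simp add: image_comp)
  have inv_eq: "inv' z u = v \<longleftrightarrow> u = z v" for u v
    using Alt_inv_apply[OF z, of v] Alt_apply_inv[OF z, of u] by auto
  have iff: "(inv' z \<circ> x) ` {1..n - 2} = {1..n - 2} \<longleftrightarrow>
      map z [n - 1, n] = [x (n - 1), x n] \<or> map z [n - 1, n] = [x n, x (n - 1)]"
  proof -
    have "2 \<le> n" using n by simp
    moreover have "{(inv' z \<circ> x) (n - 1), (inv' z \<circ> x) n} = {n - 1, n} \<longleftrightarrow>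
        map z [n - 1, n] = [x (n - 1), x n] \<or> map z [n - 1, n] = [x n, x (n - 1)]"
      by (auto simp: doubleton_eq_iff inv_eq)
    ultimately show ?thesis by (rule trans[OF Alt_image_initial_iff[OF g]])
  qed
  show ?thesis
  proof (cases "(inv' z \<circ> x) ` {1..n - 2} = {1..n - 2}")
    case True
    then have low_value: "prob_maps_to n ?low ?s (map (inv' z) (map x ?s)) = 1 / fact (n - 2)"
      using low_factors_uniform[of "n - 2" n] n set_eq by (simp add: Suc_diff_Suc numeral_2_eq_2)
    from True iff consider (same) "map z [n - 1, n] = [x (n - 1), x n]"
      | (swapped) "map z [n - 1, n] = [x n, x (n - 1)]" by blast
    then show ?thesis
    proof cases
      case same
      then have "map z [n - 1, n] \<noteq> [x n, x (n - 1)]" using xne by auto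
      with same show ?thesis using low_value by simp
    next
      case swapped
      then have "map z [n - 1, n] \<noteq> [x (n - 1), x n]" using xne by auto
      with swapped show ?thesis using low_value by simp
    qed
  next
    case False
    have "fst a ` set ?s = set ?s" if "a \<in> set ?low" for a
      using low_factor_props[of "n - 2" n a] n s that by simp
    then have "prob_maps_to n ?low ?s (map (inv' z) (map x ?s)) = 0"
      using prob_maps_to_eq_0_if_set_invariant False set_eq s by metis
    moreover have "map z [n - 1, n] \<noteq> [x (n - 1), x n]" "map z [n - 1, n] \<noteq> [x n, x (n - 1)]"
      using False unfolding iff by simp_all
    ultimately show ?thesis by (simp only: if_False add_0 div_0)
  qed
qed

lemma subprod_pmf_uniform_factors:
  assumes n: "5 \<le> n" and x: "x \<in> Alt n"
  shows "subprod_pmf (alt_group n) (uniform_factors n) x = 2 / fact n"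
proof -
  let ?T = "spread_top n @ spread_top (n - 1)" and ?low = "low_factors n (n - 2)" and ?s = "[1..<n - 1]"
  have "4 \<le> n - 1" "n - 1 \<le> n" using n by simp_all
  then have T: "fst ` set ?T \<subseteq> Alt n"
    using n spread_top_factors_in_Alt[of n n] spread_top_factors_in_Alt[of "n - 1" n] by auto
  have low: "fst ` set ?low \<subseteq> Alt n" using low_factor_props[of "n - 2" n] n by auto
  have "subprod_pmf (alt_group n) (uniform_factors n) x = prob_maps_to n (?T @ ?low) ?s (map x ?s)"
    unfolding uniform_factors_def using subprod_pmf_eq_prob_maps_to_initial x n by simp
  also have "\<dots> = (\<Sum>z\<in>Alt n. subprod_pmf (alt_group n) ?T z *
      ((if map z [n - 1, n] = [x (n - 1), x n] then 1 else 0) +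
       (if map z [n - 1, n] = [x n, x (n - 1)] then 1 else 0)) / fact (n - 2))"
    unfolding prob_maps_to_append[OF T low] using prob_maps_to_low_factors_initial[OF n x] by simp
  also have "\<dots> = (prob_maps_to n ?T [n - 1, n] [x (n - 1), x n] + prob_maps_to n ?T [n - 1, n] [x n, x (n - 1)])
      / fact (n - 2)"
    unfolding prob_maps_to_def sum_divide_distrib[symmetric] distrib_left sum.distrib ..
  also have "\<dots> = 2 / (real n * real (n - 1)) / fact (n - 2)"
  proof -
    have "x (n - 1) \<noteq> x n" using injD[OF Alt_inj[OF x], of "n - 1" n] n by auto
    moreover have "x (n - 1) \<in> {1..n}" "x n \<in> {1..n}"
      using permutes_in_image[OF Alt_permutes[OF x]] n by auto
    ultimately show ?thesis using spread_top_pair[OF n] by simp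
  qed
  also have "\<dots> = 2 / fact n"
  proof -
    have "n = Suc (Suc (n - 2))" using n by simp
    then have "fact n = real n * real (n - 1) * fact (n - 2)"
      by (metis diff_Suc_1 fact_Suc mult.assoc of_nat_mult)
    then show ?thesis by simp
  qed
  finally show ?thesis .
qed

lemma length_low_factors: "length (low_factors n m) = (\<Sum>i = 1..m. spread_length i)"
  by (induction m) (simp_all add: spread_low_def length_spread)

lemma length_uniform_factors:
  assumes "5 \<le> n"
  shows "length (uniform_factors n) = (\<Sum>i = 1..n. spread_length i)"
proof -
  have "{1..n} = insert n (insert (n - 1) {1..n - 2})"
    "n \<notin> insert (n - 1) {1..n - 2}" "n - 1 \<notin> {1..n - 2}" using assms by auto
  then have "(\<Sum>i = 1..n. spread_length i) = spread_length n + spread_length (n - 1) + (\<Sum>i = 1..n - 2. spread_length i)"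
    using assms by simp
  then show ?thesis by (simp add: uniform_factors_def spread_top_def length_spread length_low_factors)
qed

lemma alt_group_mixes_with:
  assumes "5 \<le> n"
  shows "mixes_with (alt_group n) (\<Sum>i = 1..n. spread_length i)"
  unfolding mixes_with_def length_uniform_factors[OF assms, symmetric]
proof (intro exI conjI allI impI ballI)
  fix i assume "i < length (uniform_factors n)"
  then have "uniform_factors n ! i \<in> set (uniform_factors n)" by simp
  then show "fst (uniform_factors n ! i) \<in> Alt n"
    "0 \<le> snd (uniform_factors n ! i)" "snd (uniform_factors n ! i) \<le> 1"
    using uniform_factors_props[OF assms] by auto
next
  fix x assume "x \<in> Alt n"
  then have "subprod_pmf (alt_group n) (uniform_factors n) x = 2 / fact n"
    by (rule subprod_pmf_uniform_factors[OF assms])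
  moreover have "fact n = real (2 * card (Alt n))" using alt_group_card_carrier assms by simp
  ultimately show "subprod_prob (alt_group n) (\<lambda>i. fst (uniform_factors n ! i)) (\<lambda>i. snd (uniform_factors n ! i))
      (length (uniform_factors n)) x = 1 / card (Alt n)"
    unfolding subprod_pmf_def by simp
qed

section \<open>Counting the factors\<close>

definition spread_excess :: "nat \<Rightarrow> int" where
  "spread_excess m = 2 * int (spread_length m) - 3 * int (floor_log m) - 1"

lemma spread_excess_even: "1 \<le> j \<Longrightarrow> spread_excess (2 * j) = spread_excess j - 1"
  by (simp add: spread_excess_def spread_length_even)

lemma spread_excess_odd: "1 \<le> j \<Longrightarrow> spread_excess (2 * j + 1) = spread_excess j + 1"
proof -
  assume j: "1 \<le> j"
  have "floor_log (Suc (2 * j)) = Suc (floor_log j)" using j floor_log_rec[of "2 * j + 1"] by simp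
  moreover have "spread_length (Suc (2 * j)) = spread_length j + 2"
    using spread_length_odd[OF j] spread_length_even[OF j] by simp
  ultimately show ?thesis by (simp add: spread_excess_def)
qed

lemma sum_spread_excess_odd: "(\<Sum>m = 1..2 * k + 1. spread_excess m) = 2 * (\<Sum>m = 1..k. spread_excess m) - 1"
proof (induction k)
  case 0
  then show ?case by (simp add: spread_excess_def)
next
  case (Suc k)
  have "(\<Sum>m = 1..2 * Suc k + 1. spread_excess m) =
      (\<Sum>m = 1..2 * k + 1. spread_excess m) + spread_excess (2 * Suc k) + spread_excess (2 * Suc k + 1)"
    by simp
  also have "\<dots> = 2 * (\<Sum>m = 1..Suc k. spread_excess m) - 1"
    using Suc spread_excess_even[of "Suc k"] spread_excess_odd[of "Suc k"] by simp
  finally show ?case .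
qed

lemma sum_spread_excess_even:
  "(\<Sum>m = 1..2 * Suc j. spread_excess m) = (\<Sum>m = 1..j. spread_excess m) + (\<Sum>m = 1..Suc j. spread_excess m) - 2"
proof -
  have "(\<Sum>m = 1..2 * Suc j. spread_excess m) = (\<Sum>m = 1..2 * j + 1. spread_excess m) + spread_excess (2 * Suc j)"
    by simp
  then show ?thesis using sum_spread_excess_odd[of j] spread_excess_even[of "Suc j"] by simp
qed

lemma sum_spread_excess_le: "1 \<le> n \<Longrightarrow> (\<Sum>m = 1..n. spread_excess m) \<le> -1"
proof (induction n rule: less_induct)
  case (less n)
  show ?case
  proof (cases "even n")
    case True
    then obtain i where "n = 2 * i" by blast
    with less.prems obtain j where j: "n = 2 * Suc j" by (cases i) auto
    have "(\<Sum>m = 1..j. spread_excess m) \<le> 0"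
      using less.IH[of j] j by (cases "j = 0") auto
    moreover have "(\<Sum>m = 1..Suc j. spread_excess m) \<le> -1" using less.IH[of "Suc j"] j by simp
    ultimately show ?thesis unfolding j sum_spread_excess_even by simp
  next
    case False
    then obtain k where k: "n = 2 * k + 1" by (blast elim: oddE)
    have "(\<Sum>m = 1..k. spread_excess m) \<le> 0"
      using less.IH[of k] k by (cases "k = 0") auto
    then show ?thesis unfolding k sum_spread_excess_odd by simp
  qed
qed

lemma sum_floor_log_le_log_fact: "int (\<Sum>m = 1..n. floor_log m) \<le> \<lfloor>log 2 (fact n)\<rfloor>"
proof -
  have "(2::nat) ^ (\<Sum>m = 1..n. floor_log m) = (\<Prod>m = 1..n. 2 ^ floor_log m)" by (rule power_sum)
  also have "\<dots> \<le> (\<Prod>m = 1..n. m)" by (rule prod_mono) (simp add: floor_log_exp2_le)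
  also have "\<dots> = fact n" by (simp add: fact_prod)
  finally have "real (2 ^ (\<Sum>m = 1..n. floor_log m)) \<le> real (fact n)"
    by (simp only: of_nat_le_iff)
  then have "(2::real) ^ (\<Sum>m = 1..n. floor_log m) \<le> fact n" by simp
  then have "log 2 (2 ^ (\<Sum>m = 1..n. floor_log m)) \<le> log 2 (fact n)"
    by (subst log_le_cancel_iff) auto
  then have "real (\<Sum>m = 1..n. floor_log m) \<le> log 2 (fact n)"
    by (simp add: log_pow_cancel)
  then show ?thesis by (simp add: le_floor_iff)
qed

lemma sum_spread_length_le:
  assumes "1 \<le> n"
  shows "real (\<Sum>m = 1..n. spread_length m) \<le> 3 / 2 * real_of_int \<lfloor>log 2 (fact n)\<rfloor> + real n / 2"
proof -
  have "2 * int (\<Sum>m = 1..n. spread_length m) - 3 * int (\<Sum>m = 1..n. floor_log m) - int n \<le> -1"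
    using sum_spread_excess_le[OF assms] unfolding spread_excess_def
    by (simp add: sum_subtractf sum_distrib_left)
  then have "2 * int (\<Sum>m = 1..n. spread_length m) \<le> 3 * \<lfloor>log 2 (fact n)\<rfloor> + int n"
    using sum_floor_log_le_log_fact[of n] by linarith
  then have "real_of_int (2 * int (\<Sum>m = 1..n. spread_length m)) \<le> real_of_int (3 * \<lfloor>log 2 (fact n)\<rfloor> + int n)"
    by (simp only: of_int_le_iff)
  then show ?thesis by simp
qed

lemma log_fact_eq_1_plus_log_card_Alt:
  assumes "2 \<le> n"
  shows "log 2 (fact n) = 1 + log 2 (card (Alt n))"
proof -
  have "real (fact n) = real (2 * card (Alt n))" using alt_group_card_carrier[OF assms] by simp
  moreover have "card (Alt n) > 0" using finite_Alt id_in_Alt card_gt_0_iff by blast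
  ultimately show ?thesis by (simp add: log_mult)
qed

theorem mainTheorem4:
  fixes n :: nat
  assumes "n \<ge> 5"
  shows "mixable (alt_group n) \<and>
         log 2 (fact n) - 1 \<le> real (mixlen (alt_group n)) \<and>
         real (mixlen (alt_group n)) \<le> 3 / 2 * real_of_int \<lfloor>log 2 (fact n)\<rfloor> + real n / 2"
proof -
  have mix: "mixes_with (alt_group n) (\<Sum>i = 1..n. spread_length i)"
    using alt_group_mixes_with assms by simp
  then have "mixlen (alt_group n) \<le> (\<Sum>i = 1..n. spread_length i)"
    unfolding mixlen_def by (rule Least_le)
  then have "real (mixlen (alt_group n)) \<le> real (\<Sum>i = 1..n. spread_length i)"
    by (simp only: of_nat_le_iff)
  also have "\<dots> \<le> 3 / 2 * real_of_int \<lfloor>log 2 (fact n)\<rfloor> + real n / 2"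
    using sum_spread_length_le assms by simp
  finally have upper: "real (mixlen (alt_group n)) \<le> 3 / 2 * real_of_int \<lfloor>log 2 (fact n)\<rfloor> + real n / 2" .
  have "mixes_with (alt_group n) (mixlen (alt_group n))"
    unfolding mixlen_def by (rule LeastI[of "mixes_with (alt_group n)", OF mix])
  then have "log 2 (card (Alt n)) \<le> mixlen (alt_group n)"
    using log_card_carrier_le_if_mixes_with finite_Alt id_in_Alt by blast
  moreover have "log 2 (fact n) = 1 + log 2 (card (Alt n))" using log_fact_eq_1_plus_log_card_Alt assms by simp
  ultimately have lower: "log 2 (fact n) - 1 \<le> real (mixlen (alt_group n))" by simp
  show ?thesis using mix lower upper unfolding mixable_def by blast
qed

end
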